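(* Let $k=2\kappa+1$ with $\kappa\in\{0,1,2,\dots\}$, and let $$\psi(x)=\frac{1}{k!}\,\frac{1}{x(1-x)}\,\frac{d^{k-1}}{dx^{k-1}}\Big[x^{k+1}(1-x)^k\Big],\qquad x\in[0,1]$$ (a polynomial of degree $k$). Then (i) $\int_0^1\psi(x)^2\,dx=\frac{1}{k(k+2)}$; (ii) $\int_0^1\psi(x)\psi(1-x)\,dx=\frac{1}{k(k+1)(k+2)}$; (iii) $\int_0^1 x^j\psi(x)\,dx=\frac{1}{k(k+2)}$ for $j=1,2,\dots,k$; (iv) $\int_0^1\psi(x)\,dx=\frac{1}{k(k+1)}$; (v) $\int_0^1(1-x)^j\psi(x)\,dx=\frac{1}{k(k+1)(k+2)}$ for $j=1,2,\dots,k$; (vi) $\psi'(0)=\frac{k+1}{2}$ and $\psi'(1)=\frac{k^2+2k-1}{2}$; (vii) $\int_0^1\psi'(x)\psi(1-x)\,dx=\frac{1}{k+1}$.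
   Context: The expression defining $\psi$ is understood as the polynomial obtained after cancelling the factor $x(1-x)$ (for $k=1$ this gives $\psi(x)=x$). *)

theory Defs
  imports "HOL-Analysis.Analysis" "HOL-Computational_Algebra.Polynomial"
begin

definition base_poly :: "nat \<Rightarrow> real poly" where
  "base_poly k = [:0, 1:] ^ (k + 1) * [:1, -1:] ^ k"

text \<open>psi = (1/k!) * (d/dx)^(k-1) [x^(k+1) (1-x)^k] / (x(1-x)),
  the quotient taken as polynomial division (which is exact).\<close>
definition psi_poly :: "nat \<Rightarrow> real poly" where
  "psi_poly k = smult (1 / fact k)
     (((pderiv ^^ (k - 1)) (base_poly k)) div ([:0, 1:] * [:1, -1:]))"

end

theory Submission
  imports Defs
begin

(* Let B = x^(k+1) (1-x)^k and D = B^(k-1) = k! x (1-x) psi. For i < k the derivative B^(i)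
   vanishes at 0 and 1, so k-1 integrations by parts make D orthogonal to every polynomial of
   degree at most k-2. Splitting q = q(0) (1-x) + q(1) x + x (1-x) r, the integral of q psi over
   [0,1] is therefore q(0) a + q(1) b for every q of degree at most k, where a and b are the
   integrals of (1-x) psi and x psi; all seven claims are instances of this formula, (vii) after
   one more integration by parts.
   The constants a, b and the endpoint data psi(0), psi(1), psi'(0), psi'(1) come from the
   cofactors P_i = B^(i) / x^(k-i) and Q_i = B^(i) / (1-x)^(k-i), which obey
   P_(i+1) = (k-i) P_i + x P_i' and Q_(i+1) = -(k-i) Q_i + (1-x) Q_i'. Hence their integrals and
   their (derivatives') values at the root of the removed factor satisfy first-order recurrences
   with factorial closed forms, and at i = k-1 they are k! (1-x) psi and k! x psi. *)

definition int01 :: "real poly \<Rightarrow> real" where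
  "int01 p = integral {0..1} (poly p)"

lemma integral_eq_int01: "(\<And>x. g x = poly p x) \<Longrightarrow> integral {0..1} g = int01 p"
  unfolding int01_def by (metis ext)

lemma poly_integrable_01: "poly p integrable_on {0..1::real}"
  by (intro integrable_continuous_interval continuous_intros)

lemma int01_add: "int01 (p + q) = int01 p + int01 q"
  unfolding int01_def poly_add by (rule integral_add[OF poly_integrable_01 poly_integrable_01])

lemma int01_diff: "int01 (p - q) = int01 p - int01 q"
  unfolding int01_def poly_diff by (rule integral_diff[OF poly_integrable_01 poly_integrable_01])

lemma int01_smult: "int01 (smult c p) = c * int01 p"
  unfolding int01_def poly_smult by (rule integral_mult_right)

lemma int01_minus: "int01 (- p) = - int01 p"
  unfolding int01_def poly_minus by (rule integral_neg)

lemma int01_0 [simp]: "int01 0 = 0"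
  using int01_smult[of 0 0] by simp

lemma int01_pderiv: "int01 (pderiv p) = poly p 1 - poly p 0"
proof -
  have "(poly (pderiv p) has_integral poly p 1 - poly p 0) {0..1::real}"
    by (intro fundamental_theorem_of_calculus)
       (auto intro!: DERIV_subset[OF poly_DERIV]
             simp: has_real_derivative_iff_has_vector_derivative[symmetric])
  then show ?thesis unfolding int01_def by (rule integral_unique)
qed

lemma int01_by_parts:
  "int01 (p * pderiv q) = poly (p * q) 1 - poly (p * q) 0 - int01 (pderiv p * q)"
  using int01_pderiv[of "p * q"] by (simp add: pderiv_mult int01_add algebra_simps)

lemma higher_pderiv_eq_0: "degree p < n \<Longrightarrow> (pderiv ^^ n) p = 0"
  by (intro poly_eqI) (simp add: coeff_higher_pderiv coeff_eq_0)

lemma int01_mult_higher_pderiv: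
  assumes "\<And>j. j < n \<Longrightarrow> poly ((pderiv ^^ j) f) 0 = 0 \<and> poly ((pderiv ^^ j) f) 1 = 0"
  shows "int01 (p * (pderiv ^^ n) f) = (-1) ^ n * int01 ((pderiv ^^ n) p * f)"
  using assms
proof (induction n arbitrary: p)
  case 0
  then show ?case by simp
next
  case (Suc n)
  have "int01 (p * (pderiv ^^ Suc n) f) = - int01 (pderiv p * (pderiv ^^ n) f)"
    using int01_by_parts[of p "(pderiv ^^ n) f"] Suc.prems[of n] by simp
  also have "\<dots> = (-1) ^ Suc n * int01 ((pderiv ^^ Suc n) p * f)"
    using Suc by (simp add: funpow_Suc_right del: funpow.simps)
  finally show ?case .
qed

lemma int01_mult_higher_pderiv_eq_0:
  assumes "degree p < n"
    and "\<And>j. j < n \<Longrightarrow> poly ((pderiv ^^ j) f) 0 = 0 \<and> poly ((pderiv ^^ j) f) 1 = 0"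
  shows "int01 (p * (pderiv ^^ n) f) = 0"
  using int01_mult_higher_pderiv[OF assms(2)] higher_pderiv_eq_0[OF assms(1)] by simp

lemma fact_recurrence:
  fixes f :: "nat \<Rightarrow> real"
  assumes "n \<le> N" and "\<And>i. i < n \<Longrightarrow> f (Suc i) = c * real (N - i) * f i"
  shows "f n * fact (N - n) = c ^ n * fact N * f 0"
  using assms
proof (induction n)
  case 0
  then show ?case by simp
next
  case (Suc n)
  have "N - n = Suc (N - Suc n)" using Suc.prems(1) by simp
  then have "f (Suc n) * fact (N - Suc n) = c * (f n * fact (N - n))"
    using Suc.prems(2)[of n] by simp
  also have "\<dots> = c ^ Suc n * fact N * f 0"
    using Suc by simp
  finally show ?case .
qed

lemma pderiv_power_Suc_mult:
  "pderiv (l ^ Suc m * s) = l ^ m * (smult (of_nat (Suc m)) (pderiv l * s) + l * pderiv s)"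
  by (simp only: pderiv_mult pderiv_power_Suc) (simp add: algebra_simps)

primrec deriv_cofactor :: "'a::idom poly \<Rightarrow> nat \<Rightarrow> 'a poly \<Rightarrow> nat \<Rightarrow> 'a poly" where
  "deriv_cofactor l m r 0 = r"
| "deriv_cofactor l m r (Suc i) =
     smult (of_nat (m - i)) (pderiv l * deriv_cofactor l m r i)
     + l * pderiv (deriv_cofactor l m r i)"

lemma higher_pderiv_power_mult:
  "i \<le> m \<Longrightarrow> (pderiv ^^ i) (l ^ m * r) = l ^ (m - i) * deriv_cofactor l m r i"
proof (induction i)
  case 0
  then show ?case by simp
next
  case (Suc i)
  then have "m - i = Suc (m - Suc i)" by simp
  with Suc show ?case
    by (simp only: funpow.simps o_apply pderiv_power_Suc_mult deriv_cofactor.simps)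
qed

lemma poly_deriv_cofactor_Suc_root:
  fixes l :: "'a::idom poly"
  assumes "poly l a = 0" and "pderiv l = [:c:]"
  shows "poly (deriv_cofactor l m r (Suc i)) a
    = c * of_nat (m - i) * poly (deriv_cofactor l m r i) a"
  using assms by simp

lemma poly_pderiv_deriv_cofactor_Suc_root:
  fixes l :: "'a::idom poly"
  assumes "poly l a = 0" and "pderiv l = [:c:]" and "i \<le> m"
  shows "poly (pderiv (deriv_cofactor l m r (Suc i))) a
    = c * of_nat (Suc m - i) * poly (pderiv (deriv_cofactor l m r i)) a"
  using assms by (simp add: pderiv_add pderiv_smult pderiv_mult Suc_diff_le algebra_simps)

lemma int01_deriv_cofactor_Suc:
  assumes "pderiv l = [:c:]" and "i < m"
  shows "int01 (deriv_cofactor l m r (Suc i))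
    = c * real (m - Suc i) * int01 (deriv_cofactor l m r i)
      + poly (l * deriv_cofactor l m r i) 1 - poly (l * deriv_cofactor l m r i) 0"
proof -
  have "real (m - i) = real (m - Suc i) + 1" using assms(2) by simp
  then show ?thesis
    using int01_by_parts[of l "deriv_cofactor l m r i"] assms(1)
    by (simp add: int01_add int01_smult algebra_simps)
qed

lemma int01_deriv_cofactor:
  assumes "pderiv l = [:c:]" and "i \<le> n"
    and "\<And>j. j < i \<Longrightarrow>
      poly (l * deriv_cofactor l (Suc n) r j) 1 = poly (l * deriv_cofactor l (Suc n) r j) 0"
  shows "int01 (deriv_cofactor l (Suc n) r i) * fact (n - i) = c ^ i * fact n * int01 r"
proof -
  have "int01 (deriv_cofactor l (Suc n) r (Suc j))
      = c * real (n - j) * int01 (deriv_cofactor l (Suc n) r j)" if "j < i" for j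
    using int01_deriv_cofactor_Suc[OF assms(1), of j "Suc n" r] assms(2) assms(3)[OF that] that
    by (simp del: deriv_cofactor.simps)
  from fact_recurrence[OF assms(2) this] show ?thesis by simp
qed

lemma poly_deriv_cofactor_root:
  fixes l :: "real poly"
  assumes "poly l a = 0" and "pderiv l = [:c:]" and "i \<le> m"
  shows "poly (deriv_cofactor l m r i) a * fact (m - i) = c ^ i * fact m * poly r a"
proof -
  have "poly (deriv_cofactor l m r (Suc j)) a
      = c * real (m - j) * poly (deriv_cofactor l m r j) a" for j
    using poly_deriv_cofactor_Suc_root[OF assms(1,2)] by (simp del: deriv_cofactor.simps)
  from fact_recurrence[OF assms(3) this] show ?thesis by simp
qed

lemma poly_pderiv_deriv_cofactor_root:
  fixes l :: "real poly"
  assumes "poly l a = 0" and "pderiv l = [:c:]" and "i \<le> m"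
  shows "poly (pderiv (deriv_cofactor l m r i)) a * fact (Suc m - i)
    = c ^ i * fact (Suc m) * poly (pderiv r) a"
proof -
  have "poly (pderiv (deriv_cofactor l m r (Suc j))) a
      = c * real (Suc m - j) * poly (pderiv (deriv_cofactor l m r j)) a" if "j < i" for j
    using poly_pderiv_deriv_cofactor_Suc_root[OF assms(1,2)] assms(3) that
    by (simp del: deriv_cofactor.simps)
  from fact_recurrence[OF _ this] assms(3) show ?thesis by simp
qed

definition X :: "real poly" where "X = [:0, 1:]"
definition Y :: "real poly" where "Y = [:1, -1:]"

lemma poly_X [simp]: "poly X x = x"
  by (simp add: X_def)

lemma poly_Y [simp]: "poly Y x = 1 - x"
  by (simp add: Y_def)

lemma pderiv_X [simp]: "pderiv X = [:1:]"
  by (simp add: X_def pderiv_pCons)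

lemma pderiv_Y [simp]: "pderiv Y = [:-1:]"
  by (simp add: Y_def pderiv_pCons)

lemma X_nonzero [simp]: "X \<noteq> 0" and Y_nonzero [simp]: "Y \<noteq> 0"
  by (simp_all add: X_def Y_def)

lemma degree_X [simp]: "degree X = 1" and degree_Y [simp]: "degree Y = 1"
  by (simp_all add: X_def Y_def)

lemma degree_X_mult_Y [simp]: "degree (X * Y) = 2"
  by (simp add: degree_mult_eq)

lemma poly_pcompose_Y [simp]: "poly (pcompose p Y) x = poly p (1 - x)"
  by (simp add: poly_pcompose)

lemma degree_pcompose_Y [simp]: "degree (pcompose p Y) = degree p"
  by (simp add: degree_pcompose)

lemma X_eq_1_minus_Y: "X = 1 - Y"
  by (simp add: X_def Y_def one_pCons)

lemma X_dvd_iff: "X dvd p \<longleftrightarrow> poly p 0 = 0"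
  by (simp add: X_def poly_eq_0_iff_dvd)

lemma Y_dvd_iff: "Y dvd p \<longleftrightarrow> poly p 1 = 0"
proof -
  have Y: "Y = - [:-1, 1:]" by (simp add: Y_def)
  show ?thesis unfolding Y minus_dvd_iff poly_eq_0_iff_dvd by simp
qed

lemma roots_0_1_obtain_X_Y_factor:
  assumes "poly q 0 = 0" and "poly q 1 = 0"
  obtains r where "q = X * Y * r"
proof -
  obtain s where s: "q = X * s" using assms(1) X_dvd_iff by blast
  then have "Y dvd s" using assms(2) by (simp add: Y_dvd_iff)
  then obtain t where "s = Y * t" ..
  with s show thesis by (intro that[of t]) (simp add: mult.assoc)
qed

lemma int01_mult_eq_endpoint_combination:
  assumes orth: "\<And>r. degree r + 2 \<le> n \<Longrightarrow> int01 (r * (X * Y * p)) = 0"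
    and "degree q \<le> n"
  shows "int01 (q * p) = poly q 0 * int01 (Y * p) + poly q 1 * int01 (X * p)"
proof -
  define q' where "q' = q - smult (poly q 0) Y - smult (poly q 1) X"
  obtain r where r: "q' = X * Y * r"
    by (rule roots_0_1_obtain_X_Y_factor[of q']) (simp_all add: q'_def)
  have "int01 (q' * p) = 0"
  proof (cases "r = 0")
    case False
    have "degree q' \<le> max n 1"
      unfolding q'_def using assms(2) by (intro degree_diff_le) auto
    moreover have "degree q' = degree r + 2"
      unfolding r using False by (subst degree_mult_eq) auto
    ultimately show ?thesis
      using orth[of r] by (simp add: r algebra_simps)
  qed (simp add: r)
  moreover have "q * p = (q' + smult (poly q 0) Y + smult (poly q 1) X) * p"
    by (simp add: q'_def)
  ultimately show ?thesis
    by (simp only: distrib_right mult_smult_left int01_add int01_smult add_0)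
qed

lemma int01_X_power: "int01 (X ^ n) = 1 / (real n + 1)"
proof -
  have "pderiv (smult (1 / (real n + 1)) (X ^ Suc n)) = X ^ n"
    by (simp only: pderiv_smult pderiv_power_Suc) (simp add: field_simps)
  then show ?thesis
    using int01_pderiv[of "smult (1 / (real n + 1)) (X ^ Suc n)"] by simp
qed

lemma int01_Y_power: "int01 (Y ^ n) = 1 / (real n + 1)"
proof -
  have "pderiv (smult (- 1 / (real n + 1)) (Y ^ Suc n)) = Y ^ n"
    by (simp only: pderiv_smult pderiv_power_Suc) (simp add: field_simps)
  then show ?thesis
    using int01_pderiv[of "smult (- 1 / (real n + 1)) (Y ^ Suc n)"] by simp
qed

lemma base_poly_eq: "base_poly k = X ^ (k + 1) * Y ^ k"
  by (simp add: base_poly_def X_def Y_def)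

definition base_deriv_div_X :: "nat \<Rightarrow> nat \<Rightarrow> real poly" where
  "base_deriv_div_X k i = deriv_cofactor X k (X * Y ^ k) i"

definition base_deriv_div_Y :: "nat \<Rightarrow> nat \<Rightarrow> real poly" where
  "base_deriv_div_Y k i = deriv_cofactor Y k (X ^ (k + 1)) i"

lemma higher_pderiv_base_poly:
  assumes "i \<le> k"
  shows "(pderiv ^^ i) (base_poly k) = X ^ (k - i) * base_deriv_div_X k i"
    and "(pderiv ^^ i) (base_poly k) = Y ^ (k - i) * base_deriv_div_Y k i"
proof -
  have "base_poly k = X ^ k * (X * Y ^ k)"
    by (simp only: base_poly_eq power_add power_one_right ac_simps)
  then show "(pderiv ^^ i) (base_poly k) = X ^ (k - i) * base_deriv_div_X k i"
    unfolding base_deriv_div_X_def by (simp only: higher_pderiv_power_mult[OF assms])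
  have "base_poly k = Y ^ k * X ^ (k + 1)"
    by (simp only: base_poly_eq mult.commute)
  then show "(pderiv ^^ i) (base_poly k) = Y ^ (k - i) * base_deriv_div_Y k i"
    unfolding base_deriv_div_Y_def by (simp only: higher_pderiv_power_mult[OF assms])
qed

lemma higher_pderiv_base_poly_vanishes:
  assumes "i < k"
  shows "poly ((pderiv ^^ i) (base_poly k)) 0 = 0 \<and> poly ((pderiv ^^ i) (base_poly k)) 1 = 0"
proof
  show "poly ((pderiv ^^ i) (base_poly k)) 0 = 0"
    using higher_pderiv_base_poly(1)[of i k] assms by simp
  show "poly ((pderiv ^^ i) (base_poly k)) 1 = 0"
    using higher_pderiv_base_poly(2)[of i k] assms by simp
qed

lemma int01_base_deriv_div_X:
  assumes "0 < k"
  shows "int01 (base_deriv_div_X k (k - 1)) = fact (k - 1) / ((real k + 1) * (real k + 2))"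
proof -
  have boundary: "poly (X * base_deriv_div_X k j) 1 = poly (X * base_deriv_div_X k j) 0"
    if "j < k - 1" for j
    using higher_pderiv_base_poly(1)[of j k] higher_pderiv_base_poly_vanishes[of j k] that
    by simp
  have "X * Y ^ k = Y ^ k - Y ^ Suc k"
    by (simp add: X_eq_1_minus_Y algebra_simps)
  then have "int01 (X * Y ^ k) = 1 / ((real k + 1) * (real k + 2))"
    by (simp only: int01_diff int01_Y_power) (simp add: field_simps)
  then show ?thesis
    using int01_deriv_cofactor[of X 1 "k - 1" "k - 1" "X * Y ^ k"] boundary assms
    by (simp add: base_deriv_div_X_def)
qed

lemma int01_base_deriv_div_Y:
  assumes "odd k"
  shows "int01 (base_deriv_div_Y k (k - 1)) = fact (k - 1) / (real k + 2)"
proof -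
  have boundary: "poly (Y * base_deriv_div_Y k j) 1 = poly (Y * base_deriv_div_Y k j) 0"
    if "j < k - 1" for j
    using higher_pderiv_base_poly(2)[of j k] higher_pderiv_base_poly_vanishes[of j k] that
    by simp
  have "(-1::real) ^ (k - 1) = 1" using assms by simp
  moreover have "0 < k" using assms by presburger
  ultimately show ?thesis
    using int01_deriv_cofactor[of Y "-1" "k - 1" "k - 1" "X ^ (k + 1)"] boundary
      int01_X_power[of "k + 1"]
    by (simp add: base_deriv_div_Y_def)
qed

lemma base_deriv_div_X_at_0:
  assumes "0 < k"
  shows "poly (base_deriv_div_X k (k - 1)) 0 = 0"
    and "poly (pderiv (base_deriv_div_X k (k - 1))) 0 = fact (k + 1) / 2"
proof -
  show "poly (base_deriv_div_X k (k - 1)) 0 = 0"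
    using poly_deriv_cofactor_root[of X 0 1 "k - 1" k "X * Y ^ k"]
    by (simp add: base_deriv_div_X_def)
  have "Suc k - (k - 1) = 2" using assms by simp
  then show "poly (pderiv (base_deriv_div_X k (k - 1))) 0 = fact (k + 1) / 2"
    using poly_pderiv_deriv_cofactor_root[of X 0 1 "k - 1" k "X * Y ^ k"]
    by (simp add: pderiv_mult base_deriv_div_X_def)
qed

lemma base_deriv_div_Y_at_1:
  assumes "odd k"
  shows "poly (base_deriv_div_Y k (k - 1)) 1 = fact k"
    and "poly (pderiv (base_deriv_div_Y k (k - 1))) 1 = (real k + 1) * fact (k + 1) / 2"
proof -
  have k: "0 < k" "(-1::real) ^ (k - 1) = 1" using assms by (presburger, simp)
  then show "poly (base_deriv_div_Y k (k - 1)) 1 = fact k"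
    using poly_deriv_cofactor_root[of Y 1 "-1" "k - 1" k "X ^ (k + 1)"]
    by (simp add: base_deriv_div_Y_def)
  have "Suc k - (k - 1) = 2" using k by simp
  moreover have "poly (pderiv (X ^ Suc k)) 1 = real k + 1"
    by (simp only: pderiv_power_Suc) simp
  ultimately show
    "poly (pderiv (base_deriv_div_Y k (k - 1))) 1 = (real k + 1) * fact (k + 1) / 2"
    using poly_pderiv_deriv_cofactor_root[of Y 1 "-1" "k - 1" k "X ^ (k + 1)"] k
    by (simp add: pderiv_power base_deriv_div_Y_def)
qed

lemma psi_poly_quotients:
  assumes "0 < k"
  shows "(pderiv ^^ (k - 1)) (base_poly k) = smult (fact k) (X * Y * psi_poly k)"
    and "base_deriv_div_X k (k - 1) = smult (fact k) (Y * psi_poly k)"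
    and "base_deriv_div_Y k (k - 1) = smult (fact k) (X * psi_poly k)"
proof -
  define D where "D = (pderiv ^^ (k - 1)) (base_poly k)"
  define L where "L = base_deriv_div_X k (k - 1)"
  define R where "R = base_deriv_div_Y k (k - 1)"
  have "k - (k - 1) = 1" using assms by simp
  then have DL: "D = X * L" and DR: "D = Y * R"
    using higher_pderiv_base_poly[of "k - 1" k] unfolding D_def L_def R_def by simp_all
  have "poly L 1 = 0"
    using higher_pderiv_base_poly_vanishes[of "k - 1" k] assms DL unfolding D_def by simp
  then obtain E where LE: "L = Y * E" using Y_dvd_iff by blast
  then have DE: "D = X * Y * E" using DL by (simp only: mult.assoc)
  have "psi_poly k = smult (1 / fact k) E"
    unfolding psi_poly_def X_def[symmetric] Y_def[symmetric] D_def[symmetric] DE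
    by (subst nonzero_mult_div_cancel_left) simp_all
  then have E: "E = smult (fact k) (psi_poly k)" by simp
  show "D = smult (fact k) (X * Y * psi_poly k)" using DE E by simp
  show "L = smult (fact k) (Y * psi_poly k)" using LE E by simp
  have "Y * R = Y * (X * E)" using DR DE by (simp only: ac_simps)
  then have "R = X * E" by (subst (asm) mult_left_cancel) simp_all
  then show "R = smult (fact k) (X * psi_poly k)" using E by simp
qed

lemma degree_psi_poly:
  assumes "0 < k"
  shows "degree (psi_poly k) \<le> k"
proof (cases "psi_poly k = 0")
  case False
  have "degree (base_poly k) = 2 * k + 1"
    unfolding base_poly_def by (subst degree_mult_eq) (simp_all add: degree_power_eq)
  then have "degree ((pderiv ^^ (k - 1)) (base_poly k)) = k + 2"
    using assms by (simp add: degree_higher_pderiv)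
  moreover have "degree (X * Y * psi_poly k) = degree (X * Y) + degree (psi_poly k)"
    using False by (intro degree_mult_eq) auto
  ultimately show ?thesis
    using psi_poly_quotients(1)[OF assms] by simp
qed simp

lemma psi_poly_endpoint_values:
  assumes "odd k"
  shows "poly (psi_poly k) 0 = 0" and "poly (psi_poly k) 1 = 1"
    and "poly (pderiv (psi_poly k)) 0 = (real k + 1) / 2"
    and "poly (pderiv (psi_poly k)) 1 = ((real k)^2 + 2 * real k - 1) / 2"
proof -
  have k: "0 < k" using assms by presburger
  note L = psi_poly_quotients(2)[OF k] and R = psi_poly_quotients(3)[OF k]
  show psi0: "poly (psi_poly k) 0 = 0"
    using base_deriv_div_X_at_0(1)[OF k, unfolded L] by simp
  show psi1: "poly (psi_poly k) 1 = 1"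
    using base_deriv_div_Y_at_1(1)[OF assms, unfolded R] by simp
  show "poly (pderiv (psi_poly k)) 0 = (real k + 1) / 2"
    using base_deriv_div_X_at_0(2)[OF k, unfolded L] psi0
    by (simp add: pderiv_smult pderiv_mult)
  have "fact k * (1 + poly (pderiv (psi_poly k)) 1) = fact k * ((real k + 1)^2 / 2)"
    using base_deriv_div_Y_at_1(2)[OF assms, unfolded R] psi1
    by (simp add: pderiv_smult pderiv_mult algebra_simps power2_eq_square)
  then have "1 + poly (pderiv (psi_poly k)) 1 = (real k + 1)^2 / 2"
    by (rule mult_left_cancel[THEN iffD1, rotated]) simp
  then show "poly (pderiv (psi_poly k)) 1 = ((real k)^2 + 2 * real k - 1) / 2"
    by (simp add: field_simps power2_eq_square)
qed

lemma int01_psi_poly_weights: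
  assumes "odd k"
  shows "int01 (Y * psi_poly k) = 1 / (real k * (real k + 1) * (real k + 2))"
    and "int01 (X * psi_poly k) = 1 / (real k * (real k + 2))"
    and "int01 (psi_poly k) = 1 / (real k * (real k + 1))"
proof -
  have k: "0 < k" using assms by presburger
  then have fact_k: "fact k = real k * fact (k - 1)" by (simp add: fact_reduce)
  have "fact k * int01 (Y * psi_poly k) = fact (k - 1) / ((real k + 1) * (real k + 2))"
    using int01_base_deriv_div_X[OF k, unfolded psi_poly_quotients(2)[OF k] int01_smult] .
  then have "int01 (Y * psi_poly k) = fact (k - 1) / ((real k + 1) * (real k + 2)) / fact k"
    by (metis fact_nonzero nonzero_mult_div_cancel_left)
  then show Y_psi: "int01 (Y * psi_poly k) = 1 / (real k * (real k + 1) * (real k + 2))"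
    by (simp add: fact_k)
  have "fact k * int01 (X * psi_poly k) = fact (k - 1) / (real k + 2)"
    using int01_base_deriv_div_Y[OF assms, unfolded psi_poly_quotients(3)[OF k] int01_smult] .
  then have "int01 (X * psi_poly k) = fact (k - 1) / (real k + 2) / fact k"
    by (metis fact_nonzero nonzero_mult_div_cancel_left)
  then show X_psi: "int01 (X * psi_poly k) = 1 / (real k * (real k + 2))"
    by (simp add: fact_k)
  have nz: "real k * (real k + 1) * (real k + 2) * (real k * (real k + 2)) \<noteq> 0"
    "real k * (real k + 1) * (real k + 2) \<noteq> 0" "real k * (real k + 2) \<noteq> 0"
    "real k * (real k + 1) \<noteq> 0"
    using k by auto
  have "psi_poly k = Y * psi_poly k + X * psi_poly k"
    by (simp add: X_eq_1_minus_Y algebra_simps)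
  then have "int01 (psi_poly k) = int01 (Y * psi_poly k) + int01 (X * psi_poly k)"
    by (metis int01_add)
  also have "\<dots> = 1 / (real k * (real k + 1))"
    unfolding Y_psi X_psi add_frac_eq[OF nz(2,3)] frac_eq_eq[OF nz(1,4)]
    by (simp add: algebra_simps)
  finally show "int01 (psi_poly k) = 1 / (real k * (real k + 1))" .
qed

lemma psi_poly_orthogonal:
  assumes "0 < k" and "degree r + 2 \<le> k"
  shows "int01 (r * (X * Y * psi_poly k)) = 0"
proof -
  have "int01 (r * (pderiv ^^ (k - 1)) (base_poly k)) = 0"
    using assms higher_pderiv_base_poly_vanishes[of _ k]
    by (intro int01_mult_higher_pderiv_eq_0) auto
  then show ?thesis
    unfolding psi_poly_quotients(1)[OF assms(1)] mult_smult_right int01_smult by simp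
qed

lemma int01_mult_psi_poly:
  assumes "odd k" and "degree q \<le> k"
  shows "int01 (q * psi_poly k)
    = poly q 0 / (real k * (real k + 1) * (real k + 2)) + poly q 1 / (real k * (real k + 2))"
proof -
  have "0 < k" using assms by presburger
  then show ?thesis
    using int01_mult_eq_endpoint_combination[OF psi_poly_orthogonal assms(2)]
      int01_psi_poly_weights[OF assms(1)] by simp
qed

lemma int01_pderiv_psi_poly_reflected:
  assumes "odd k"
  shows "int01 (pcompose (psi_poly k) Y * pderiv (psi_poly k)) = 1 / (real k + 1)"
proof -
  define p where "p = psi_poly k"
  have k: "0 < k" using assms by presburger
  note endpoints = psi_poly_endpoint_values[OF assms, folded p_def]
  have "pderiv (pcompose p Y) = - pcompose (pderiv p) Y"
    by (simp add: pderiv_pcompose)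
  then have "int01 (pcompose p Y * pderiv p) = int01 (pcompose (pderiv p) Y * p)"
    using int01_by_parts[of "pcompose p Y" p] endpoints(1,2)
    by (simp add: int01_minus)
  also have "\<dots> = poly (pderiv p) 1 / (real k * (real k + 1) * (real k + 2))
      + poly (pderiv p) 0 / (real k * (real k + 2))"
    using int01_mult_psi_poly[OF assms, of "pcompose (pderiv p) Y", folded p_def]
      degree_psi_poly[OF k, folded p_def] by (simp add: degree_pderiv)
  also have "\<dots> = 1 / (real k + 1)"
  proof -
    have nz: "real k * (real k + 1) * (real k + 2) * (real k * (real k + 2)) \<noteq> 0"
      "real k * (real k + 1) * (real k + 2) \<noteq> 0" "real k * (real k + 2) \<noteq> 0"
      "real k + 1 \<noteq> 0"
      using k by auto
    show ?thesis
      unfolding endpoints(3,4) add_frac_eq[OF nz(2,3)] frac_eq_eq[OF nz(1,4)]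
      by (simp add: field_simps power2_eq_square)
  qed
  finally show ?thesis unfolding p_def .
qed

theorem lemma2p2:
  fixes \<kappa> k :: nat and \<psi> :: "real \<Rightarrow> real"
  assumes hk: "k = 2 * \<kappa> + 1"
    and hpsi: "\<psi> = poly (psi_poly k)"
  shows "integral {0..1} (\<lambda>x. \<psi> x ^ 2) = 1 / (real k * (real k + 2))
    \<and> integral {0..1} (\<lambda>x. \<psi> x * \<psi> (1 - x)) = 1 / (real k * (real k + 1) * (real k + 2))
    \<and> (\<forall>j\<in>{1..k}. integral {0..1} (\<lambda>x. x ^ j * \<psi> x) = 1 / (real k * (real k + 2)))
    \<and> integral {0..1} \<psi> = 1 / (real k * (real k + 1))
    \<and> (\<forall>j\<in>{1..k}. integral {0..1} (\<lambda>x. (1 - x) ^ j * \<psi> x) = 1 / (real k * (real k + 1) * (real k + 2)))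
    \<and> poly (pderiv (psi_poly k)) 0 = (real k + 1) / 2
    \<and> poly (pderiv (psi_poly k)) 1 = ((real k)^2 + 2 * real k - 1) / 2
    \<and> integral {0..1} (\<lambda>x. poly (pderiv (psi_poly k)) x * \<psi> (1 - x)) = 1 / (real k + 1)"
proof -
  define p where "p = psi_poly k"
  have odd: "odd k" using hk by simp
  then have deg: "degree p \<le> k" unfolding p_def by (intro degree_psi_poly) presburger
  note endpoints = psi_poly_endpoint_values[OF odd, folded p_def]
  note int01_mult_p = int01_mult_psi_poly[OF odd, folded p_def]
  have "integral {0..1} (\<lambda>x. \<psi> x ^ 2) = int01 (p * p)"
    and "integral {0..1} (\<lambda>x. \<psi> x * \<psi> (1 - x)) = int01 (pcompose p Y * p)"
    and "integral {0..1} (\<lambda>x. x ^ j * \<psi> x) = int01 (X ^ j * p)"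
    and "integral {0..1} \<psi> = int01 p"
    and "integral {0..1} (\<lambda>x. (1 - x) ^ j * \<psi> x) = int01 (Y ^ j * p)"
    and "integral {0..1} (\<lambda>x. poly (pderiv p) x * \<psi> (1 - x))
      = int01 (pcompose p Y * pderiv p)"
    for j
    by (intro integral_eq_int01; simp add: hpsi p_def power2_eq_square poly_power)+
  then show ?thesis
    using int01_mult_p[of p] int01_mult_p[of "pcompose p Y"] int01_mult_p[of "X ^ _"]
      int01_mult_p[of "Y ^ _"] deg endpoints
      int01_psi_poly_weights(3)[OF odd, folded p_def]
      int01_pderiv_psi_poly_reflected[OF odd, folded p_def]
    by (auto simp: p_def[symmetric] degree_power_eq)
qed

end
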